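(* Let $\mathfrak{f}_1(z)=\sum_{n\ge0}\binom{2n}{n}^2z^n$ and $\mathfrak{f}_2(z)=\sum_{n\ge0}\frac{-1}{2n-1}\binom{2n}{n}^2z^n$. Then $\mathfrak{f}_2\in1+z\mathbb{Z}[[z]]$, and for every prime $p$, $$\mathfrak{f}_{2|p}(z)=P_{2,p}(z)\,(\mathfrak{f}_{1|p}(z))^p\qquad\text{and}\qquad \mathfrak{f}_{2|p}(z)=\frac{P_{1,p}(z)^p}{P_{2,p}(z)^{p-1}}\,\mathfrak{f}_{2|p}(z)^p,$$ where $P_{1,p},P_{2,p}\in\mathbb{F}_p[z]$ are the $p$-truncations of $\mathfrak{f}_1,\mathfrak{f}_2$.
   Context: For $f=\sum a(n)z^n\in\mathbb{Z}[[z]]$, $f_{|p}=\sum(a(n)\bmod p)z^n\in\mathbb{F}_p[[z]]$ and its $p$-truncation is $\sum_{n=0}^{p-1}(a(n)\bmod p)z^n$. *)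

theory Defs
  imports "HOL-Computational_Algebra.Computational_Algebra" "Berlekamp_Zassenhaus.Finite_Field"
begin

definition ff1 :: "int fps" where
  "ff1 = Abs_fps (\<lambda>n. int ((2*n) choose n) ^ 2)"

definition ff2_rat :: "rat fps" where
  "ff2_rat = Abs_fps (\<lambda>n. - (of_nat ((2*n) choose n) ^ 2) / (2 * of_nat n - 1))"

text \<open>Integer version of f2 (meaningful once the coefficients are known to be integers).\<close>
definition ff2 :: "int fps" where
  "ff2 = Abs_fps (\<lambda>n. \<lfloor>fps_nth ff2_rat n\<rfloor>)"

definition red_mod :: "int fps \<Rightarrow> 'p::prime_card mod_ring fps" where
  "red_mod f = Abs_fps (\<lambda>n. of_int (fps_nth f n))"

definition trunc_mod :: "int fps \<Rightarrow> 'p::prime_card mod_ring poly" where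
  "trunc_mod f = Poly (map (\<lambda>n. of_int (fps_nth f n)) [0..<CARD('p)])"

end

(*
  In F_p[[z]] one has F^p = F(z^p), so a sequence with c(a + p m) = c(a) d(m) for a < p has
  generating series (p-truncation of c) * D^p. Lucas's theorem gives this for the central binomial
  coefficients, both sides being 0 when 2a >= p because p then divides (2a choose a). It passes to
  the integer coefficients -(2n choose n)^2 / (2n - 1) of f2 since 2n - 1 = 2a - 1 mod p; when p
  divides 2a - 1 both sides vanish again. With G = f1^p, the identities f1 = P1 G and f2 = P2 G
  give f2^p = P2^p G^p and G = P1^p G^p, whence the second formula.
*)
theory Submission
  imports Defs
begin

lemma fps_power_CHAR_nth:
  fixes F :: "'a::comm_ring_1 fps"
  assumes "prime CHAR('a)"
  shows "(F ^ CHAR('a)) $ n = (if CHAR('a) dvd n then (F $ (n div CHAR('a))) ^ CHAR('a) else 0)"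
proof (induction n arbitrary: F rule: less_induct)
  case (less n)
  let ?p = "CHAR('a)"
  have "?p > 0" using assms prime_gt_0_nat by blast
  define G where "G = fps_shift 1 F"
  have "F = fps_const (F $ 0) + fps_X * G"
    unfolding G_def by (rule fps_ext) simp
  also have "(fps_const (F $ 0) + fps_X * G) ^ ?p = fps_const (F $ 0) ^ ?p + (fps_X * G) ^ ?p"
    by (rule freshmans_dream) (simp_all add: assms)
  finally have "F ^ ?p = fps_const ((F $ 0) ^ ?p) + fps_X ^ ?p * G ^ ?p"
    by (simp add: fps_const_power power_mult_distrib)
  hence coeff: "(F ^ ?p) $ n = (if n = 0 then (F $ 0) ^ ?p else 0) + (if n < ?p then 0 else (G ^ ?p) $ (n - ?p))"
    by (simp add: fps_X_power_mult_nth)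
  show ?case
  proof (cases "n < ?p")
    case True
    then show ?thesis using coeff by (auto elim: dvdE)
  next
    case False
    then have IH: "(G ^ ?p) $ (n - ?p) = (if ?p dvd (n - ?p) then (G $ ((n - ?p) div ?p)) ^ ?p else 0)"
      using \<open>?p > 0\<close> less.IH by simp
    have "?p dvd (n - ?p) \<longleftrightarrow> ?p dvd n" using False by (simp add: dvd_minus_self)
    moreover have "G $ ((n - ?p) div ?p) = F $ (n div ?p)"
      using False \<open>?p > 0\<close> by (simp add: G_def le_div_geq)
    ultimately show ?thesis using coeff IH False \<open>?p > 0\<close> by auto
  qed
qed

lemma fps_of_poly_mult_power_CHAR_nth:
  fixes P :: "'a::comm_ring_1 poly" and F :: "'a fps"
  assumes "prime CHAR('a)" and "degree P < CHAR('a)"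
  shows "(fps_of_poly P * F ^ CHAR('a)) $ n
           = Polynomial.coeff P (n mod CHAR('a)) * (F $ (n div CHAR('a))) ^ CHAR('a)"
proof -
  let ?p = "CHAR('a)"
  have "(fps_of_poly P * F ^ ?p) $ n = (\<Sum>i=0..n. Polynomial.coeff P i * (F ^ ?p) $ (n - i))"
    by (simp add: fps_mult_nth)
  also have "\<dots> = (\<Sum>i\<in>{n mod ?p}. Polynomial.coeff P i * (F ^ ?p) $ (n - i))"
  proof (rule sum.mono_neutral_right)
    show "\<forall>i\<in>{0..n} - {n mod ?p}. Polynomial.coeff P i * (F ^ ?p) $ (n - i) = 0"
    proof
      fix i assume i: "i \<in> {0..n} - {n mod ?p}"
      have "\<not> (i < ?p \<and> ?p dvd (n - i))"
      proof
        assume "i < ?p \<and> ?p dvd (n - i)"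
        then have "i = n mod ?p"
          using i by (metis DiffD1 atLeastAtMost_iff mod_eq_dvd_iff_nat mod_less)
        with i show False by simp
      qed
      then show "Polynomial.coeff P i * (F ^ ?p) $ (n - i) = 0"
        using assms by (auto simp: fps_power_CHAR_nth coeff_eq_0)
    qed
  qed simp_all
  also have "\<dots> = Polynomial.coeff P (n mod ?p) * (F $ (n div ?p)) ^ ?p"
    using assms by (simp add: fps_power_CHAR_nth minus_mod_eq_mult_div)
  finally show ?thesis .
qed

lemma power_CARD_mod_ring [simp]: "(x :: 'p::prime_card mod_ring) ^ CARD('p) = x"
  using finite_field_power_card_eq_same[of x] by simp

lemma coeff_one_plus_X_power: "Polynomial.coeff ([:1, 1:] ^ n) k = (of_nat (n choose k) :: 'a::comm_semiring_1)"
proof (cases "k \<le> n")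
  case True
  then show ?thesis by (simp add: coeff_linear_poly_power)
next
  case False
  then show ?thesis by (simp add: coeff_eq_0 degree_linear_power binomial_eq_0)
qed

lemma lucas_binomial_mod_ring:
  fixes r s q t :: nat
  assumes "r < CARD('p::prime_card)" and "s < CARD('p)"
  shows "(of_nat ((r + CARD('p) * q) choose (s + CARD('p) * t)) :: 'p mod_ring)
           = of_nat (r choose s) * of_nat (q choose t)"
proof -
  let ?p = "CARD('p)" and ?L = "[:1, 1:] :: 'p mod_ring poly"
  have "fps_of_poly (?L ^ (r + ?p * q)) = fps_of_poly (?L ^ r) * fps_of_poly (?L ^ q) ^ ?p"
    by (simp add: fps_of_poly_mult fps_of_poly_power power_add power_mult mult.commute)
  moreover have "(fps_of_poly (?L ^ r) * fps_of_poly (?L ^ q) ^ ?p) $ (s + ?p * t)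
                   = Polynomial.coeff (?L ^ r) s * Polynomial.coeff (?L ^ q) t"
    using assms fps_of_poly_mult_power_CHAR_nth[of "?L ^ r" "fps_of_poly (?L ^ q)" "s + ?p * t"]
    by (simp add: degree_linear_power prime_card)
  ultimately show ?thesis
    by (metis coeff_one_plus_X_power fps_of_poly_nth)
qed

lemma prime_dvd_central_binomial:
  assumes "prime p" and "a < p" and "p \<le> 2 * a"
  shows "p dvd ((2 * a) choose a)"
proof -
  have "fact (2 * a) = fact a * fact a * ((2 * a) choose a)"
    using binomial_fact_lemma[of a "2 * a"] by (simp add: mult_2)
  moreover have "p dvd fact (2 * a)" and "\<not> p dvd fact a"
    using assms by (simp_all add: prime_dvd_fact_iff)
  ultimately show ?thesis
    using \<open>prime p\<close> by (metis prime_dvd_mult_iff)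
qed

lemma central_binomial_mod_ring:
  assumes "a < CARD('p::prime_card)"
  shows "(of_nat ((2 * (a + CARD('p) * m)) choose (a + CARD('p) * m)) :: 'p mod_ring)
           = of_nat ((2 * a) choose a) * of_nat ((2 * m) choose m)"
proof (cases "2 * a < CARD('p)")
  case True
  have "2 * (a + CARD('p) * m) = 2 * a + CARD('p) * (2 * m)" by simp
  then show ?thesis
    using lucas_binomial_mod_ring[OF True assms] by metis
next
  case False
  have "2 * (a + CARD('p) * m) = (2 * a - CARD('p)) + CARD('p) * (2 * m + 1)"
    using False by (simp add: algebra_simps)
  moreover have "2 * a - CARD('p) < CARD('p)" and "2 * a - CARD('p) < a"
    using False assms by linarith+
  ultimately have "(of_nat ((2 * (a + CARD('p) * m)) choose (a + CARD('p) * m)) :: 'p mod_ring)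
                     = of_nat ((2 * a - CARD('p)) choose a) * of_nat ((2 * m + 1) choose m)"
    using lucas_binomial_mod_ring assms by metis
  then have "(of_nat ((2 * (a + CARD('p) * m)) choose (a + CARD('p) * m)) :: 'p mod_ring) = 0"
    using \<open>2 * a - CARD('p) < a\<close> by (simp add: binomial_eq_0)
  moreover have "(of_nat ((2 * a) choose a) :: 'p mod_ring) = 0"
    using prime_dvd_central_binomial[OF prime_card assms] False
    by (simp add: of_nat_eq_0_iff_char_dvd)
  ultimately show ?thesis by simp
qed

lemma Suc_times_central_binomial:
  "Suc k * ((2 * Suc k) choose Suc k) = 2 * (2 * k + 1) * ((2 * k) choose k)"
proof -
  have "Suc (2 * k + 1) = 2 * Suc k" by simp
  then have "2 * Suc k * ((2 * k + 1) choose k) = ((2 * Suc k) choose Suc k) * Suc k"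
    using Suc_times_binomial_eq[of "2 * k + 1" k] by metis
  then have central: "(2 * Suc k) choose Suc k = 2 * ((2 * k + 1) choose k)"
    by (metis mult.assoc mult.commute mult_cancel2 nat.distinct(1))
  have odd: "Suc k * ((2 * k + 1) choose k) = (2 * k + 1) * ((2 * k) choose k)"
    using Suc_times_binomial_eq[of "2 * k" k] binomial_symmetric[of k "2 * k + 1"]
    by (simp del: binomial_Suc_Suc)
  have "Suc k * ((2 * Suc k) choose Suc k) = 2 * (Suc k * ((2 * k + 1) choose k))"
    by (simp only: central mult.left_commute)
  also have "\<dots> = 2 * (2 * k + 1) * ((2 * k) choose k)"
    by (simp only: odd mult.assoc)
  finally show ?thesis .
qed

text \<open>This is \<open>(2n choose n) / (2n - 1)\<close>: with \<open>B = (2n - 2 choose n - 1)\<close> one has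
  \<open>n (2n choose n) = 2 (2n - 1) B\<close>, so \<open>4 B - (2n choose n) = 2 B / n\<close>, twice a Catalan number.\<close>

definition central_binomial_quot :: "nat \<Rightarrow> int" where
  "central_binomial_quot n =
     (if n = 0 then -1 else 4 * int ((2 * n - 2) choose (n - 1)) - int ((2 * n) choose n))"

lemma central_binomial_quot_mult:
  "central_binomial_quot n * (2 * int n - 1) = int ((2 * n) choose n)"
proof (cases n)
  case 0
  then show ?thesis by (simp add: central_binomial_quot_def)
next
  case (Suc k)
  define C where "C = int ((2 * Suc k) choose Suc k)"
  define B where "B = int ((2 * k) choose k)"
  have "int (Suc k * ((2 * Suc k) choose Suc k)) = int (2 * (2 * k + 1) * ((2 * k) choose k))"
    by (simp only: Suc_times_central_binomial)
  then have rec: "(int k + 1) * C = 2 * (2 * int k + 1) * B"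
    by (simp del: binomial_Suc_Suc add: C_def B_def algebra_simps)
  have "(int k + 1) * ((4 * B - C) * (2 * int k + 1))
          = 4 * (2 * int k + 1) * (int k + 1) * B - (2 * int k + 1) * ((int k + 1) * C)"
    by (simp add: algebra_simps)
  also have "\<dots> = 2 * (2 * int k + 1) * B"
    unfolding rec by (simp add: algebra_simps)
  also have "\<dots> = (int k + 1) * C"
    by (simp add: rec)
  finally have "(int k + 1) * ((4 * B - C) * (2 * int k + 1)) = (int k + 1) * C" .
  then have quot_mult: "(4 * B - C) * (2 * int k + 1) = C" by simp
  have quot: "central_binomial_quot n = 4 * B - C"
    using Suc by (simp del: binomial_Suc_Suc add: central_binomial_quot_def C_def B_def)
  have odd: "2 * int n - 1 = 2 * int k + 1"
    using Suc by simp
  show ?thesis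
    unfolding quot odd quot_mult by (simp only: C_def Suc)
qed

definition ff2_coeff :: "nat \<Rightarrow> int" where
  "ff2_coeff n = - int ((2 * n) choose n) * central_binomial_quot n"

lemma ff2_rat_nth: "ff2_rat $ n = of_int (ff2_coeff n)"
proof -
  define C :: rat where "C = of_nat ((2 * n) choose n)"
  define q :: rat where "q = of_int (central_binomial_quot n)"
  define d :: rat where "d = 2 * of_nat n - 1"
  have "C = q * d"
    using arg_cong[OF central_binomial_quot_mult[of n], of "of_int :: int \<Rightarrow> rat"]
    by (simp add: C_def q_def d_def)
  moreover have "d \<noteq> 0"
  proof
    assume "d = 0"
    then have "of_int (2 * int n - 1) = (0 :: rat)" by (simp add: d_def)
    then show False by presburger
  qed
  ultimately have "- (C ^ 2) / d = - C * q"
    by (simp add: power2_eq_square)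
  then show ?thesis
    by (simp add: ff2_rat_def ff2_coeff_def C_def q_def d_def)
qed

lemma ff2_nth: "ff2 $ n = ff2_coeff n"
  by (simp add: ff2_def ff2_rat_nth)

lemma ff2_coeff_mod_ring:
  assumes "a < CARD('p::prime_card)"
  shows "(of_int (ff2_coeff (a + CARD('p) * m)) :: 'p mod_ring)
           = of_int (ff2_coeff a) * (of_nat ((2 * m) choose m)) ^ 2"
proof -
  define n where "n = a + CARD('p) * m"
  define c :: "nat \<Rightarrow> 'p mod_ring" where "c k = of_nat ((2 * k) choose k)" for k
  define q :: "nat \<Rightarrow> 'p mod_ring" where "q k = of_int (central_binomial_quot k)" for k
  define d :: "nat \<Rightarrow> 'p mod_ring" where "d k = of_int (2 * int k - 1)" for k
  have ff2: "of_int (ff2_coeff k) = - c k * q k" for k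
    by (simp add: ff2_coeff_def c_def q_def)
  have cqd: "c k = q k * d k" for k
    using arg_cong[OF central_binomial_quot_mult[of k], of "of_int :: int \<Rightarrow> 'p mod_ring"]
    by (simp add: c_def q_def d_def)
  have lucas: "c n = c a * c m"
    unfolding c_def n_def by (rule central_binomial_mod_ring[OF assms])
  have "d n = d a"
    by (simp add: d_def n_def algebra_simps)
  have "of_int (ff2_coeff n) = of_int (ff2_coeff a) * c m ^ 2"
  proof (cases "d a = 0")
    case False
    have qn: "q n = c a * c m / d a" and qa: "q a = c a / d a"
      using cqd[of n] cqd[of a] lucas \<open>d n = d a\<close> False by simp_all
    show ?thesis
      by (simp only: ff2 lucas qn qa) (simp add: power2_eq_square mult_ac)
  next
    case True
    then have "int CARD('p) dvd 2 * int a - 1"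
      unfolding d_def by (simp only: of_int_eq_0_iff_char_dvd semiring_char_mod_ring)
    moreover have "2 * int a - 1 \<noteq> 0" by presburger
    ultimately have "\<bar>int CARD('p)\<bar> \<le> \<bar>2 * int a - 1\<bar>"
      by (blast intro: dvd_imp_le_int)
    then have "CARD('p) \<le> 2 * a"
      using prime_ge_2_nat[OF prime_card[where 'a = 'p]] by linarith
    then have "c a = 0"
      using prime_dvd_central_binomial[OF prime_card assms]
      by (simp add: c_def of_nat_eq_0_iff_char_dvd)
    then show ?thesis
      using lucas by (simp add: ff2)
  qed
  then show ?thesis by (simp add: n_def c_def)
qed

lemma coeff_trunc_mod:
  "Polynomial.coeff (trunc_mod f :: 'p::prime_card mod_ring poly) n
     = (if n < CARD('p) then of_int (f $ n) else 0)"
  by (simp add: trunc_mod_def nth_default_def)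

lemma red_mod_eq_trunc_mod_mult_power:
  fixes f g :: "int fps"
  assumes "\<And>a m. a < CARD('p) \<Longrightarrow>
             (of_int (f $ (a + CARD('p) * m)) :: 'p::prime_card mod_ring) = of_int (f $ a) * of_int (g $ m)"
  shows "(red_mod f :: 'p mod_ring fps) = fps_of_poly (trunc_mod f) * red_mod g ^ CARD('p)"
proof (rule fps_ext)
  fix n
  let ?p = "CARD('p)"
  have "degree (trunc_mod f :: 'p mod_ring poly) < CHAR('p mod_ring)"
    by (rule degree_lessI) (simp_all add: coeff_trunc_mod)
  then have "(fps_of_poly (trunc_mod f) * (red_mod g :: 'p mod_ring fps) ^ ?p) $ n
               = of_int (f $ (n mod ?p)) * of_int (g $ (n div ?p))"
    using fps_of_poly_mult_power_CHAR_nth[of "trunc_mod f" "red_mod g :: 'p mod_ring fps" n] prime_card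
    by (simp add: coeff_trunc_mod red_mod_def)
  also have "\<dots> = of_int (f $ n)"
    using assms[of "n mod ?p" "n div ?p"] by simp
  finally show "red_mod f $ n = (fps_of_poly (trunc_mod f) * (red_mod g :: 'p mod_ring fps) ^ ?p) $ n"
    by (simp add: red_mod_def)
qed

lemma fps_eq_divide_power_mult_power:
  fixes F G P Q :: "'a::field fps"
  assumes "F = P * F ^ p" and "G = Q * F ^ p" and "Q $ 0 \<noteq> 0" and "p > 0"
  shows "G = P ^ p / Q ^ (p - 1) * G ^ p"
proof -
  have Q: "Q ^ p = Q ^ (p - 1) * Q"
    using \<open>p > 0\<close> by (simp flip: power_Suc2)
  have unit: "(Q ^ (p - 1)) $ 0 \<noteq> 0"
    using \<open>Q $ 0 \<noteq> 0\<close> by (simp add: fps_power_zeroth)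
  have "P ^ p / Q ^ (p - 1) * G ^ p = Q * (inverse (Q ^ (p - 1)) * Q ^ (p - 1)) * (P * F ^ p) ^ p"
    using unit by (simp add: fps_divide_unit assms(2) power_mult_distrib Q mult_ac)
  also have "\<dots> = G"
    using unit assms(1,2) by (simp add: inverse_mult_eq_1)
  finally show ?thesis ..
qed

lemma red_mod_ff1:
  "(red_mod ff1 :: 'p::prime_card mod_ring fps) = fps_of_poly (trunc_mod ff1) * red_mod ff1 ^ CARD('p)"
proof (rule red_mod_eq_trunc_mod_mult_power)
  fix a m assume "a < CARD('p)"
  show "(of_int (ff1 $ (a + CARD('p) * m)) :: 'p mod_ring) = of_int (ff1 $ a) * of_int (ff1 $ m)"
    unfolding ff1_def fps_nth_Abs_fps of_int_power of_int_of_nat_eq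
      central_binomial_mod_ring[OF \<open>a < CARD('p)\<close>] power_mult_distrib ..
qed

lemma red_mod_ff2:
  "(red_mod ff2 :: 'p::prime_card mod_ring fps) = fps_of_poly (trunc_mod ff2) * red_mod ff1 ^ CARD('p)"
  by (rule red_mod_eq_trunc_mod_mult_power) (simp add: ff2_nth ff1_def ff2_coeff_mod_ring)

theorem mainTheorem14:
  "(\<forall>n. fps_nth ff2_rat n \<in> \<int>) \<and> fps_nth ff2_rat 0 = 1 \<and>
   (red_mod ff2 :: 'p::prime_card mod_ring fps)
      = fps_of_poly (trunc_mod ff2) * (red_mod ff1) ^ CARD('p) \<and>
   (red_mod ff2 :: 'p::prime_card mod_ring fps)
      = fps_of_poly (trunc_mod ff1) ^ CARD('p)
          / fps_of_poly (trunc_mod ff2) ^ (CARD('p) - 1)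
          * (red_mod ff2) ^ CARD('p)"
proof -
  have ff2_0: "ff2_coeff 0 = 1"
    by (simp add: ff2_coeff_def central_binomial_quot_def)
  have "fps_of_poly (trunc_mod ff2 :: 'p mod_ring poly) $ 0 \<noteq> 0"
    by (simp add: coeff_trunc_mod ff2_nth ff2_0)
  then have "(red_mod ff2 :: 'p mod_ring fps)
               = fps_of_poly (trunc_mod ff1) ^ CARD('p) / fps_of_poly (trunc_mod ff2) ^ (CARD('p) - 1)
                   * red_mod ff2 ^ CARD('p)"
    by (rule fps_eq_divide_power_mult_power[OF red_mod_ff1 red_mod_ff2]) simp
  then show ?thesis
    using red_mod_ff2 by (simp add: ff2_rat_nth ff2_0)
qed

end
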